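(* Let $k>0$ and let $Y_1,Y_2,\dots$ be i.i.d. qualities in $[0,1]$ whose gap $1-Y$ has cumulative distribution function $\Pr[1-Y\le x]=x^k$ for $x\in[0,1]$ (a power-law distribution). Fix $0\le \alpha<1$ and consider the threshold rule with $\mathcal{X}_0=[0,1]$ and $\mathcal{X}_i=\{y\in[0,1]: y\ge 1-c_i\}$ with $c_i=1/i^{\alpha}$ for $i\ge 1$. Then this threshold rule achieves an $O(1)$ approximation to the expected gap, i.e. there is a constant $C$ such that $E[\mathrm{Gap}_n]/E[\mathrm{Gap}^*_n]\le C$ for all $n$, where $C$ depends only on $\alpha$ and not on the parameter $k$ of the distribution.
   Context: Online selection: samples $Y_1,Y_2,\dots$ arrive one at a time; a threshold rule is a nested sequence of sets $\mathcal{X}_0\supseteq\mathcal{X}_1\supseteq\cdots$, and sample $Y_t$ is selected if and only if $Y_t\in\mathcal{X}_j$, where $j$ is the number of samples selected among $Y_1,\dots,Y_{t-1}$ (decisions are irrevocable). Let $T_n$ be the index of the $n$-th selected sample and $S_n$ the set of the $n$ selected samples. For a finite set $S$ of qualities, its mean quality gap is $\mathrm{Gap}(S)=1-\frac{1}{|S|}\sum_{y\in S}y$. Put $\mathrm{Gap}_n=\mathrm{Gap}(S_n)$ and $\mathrm{Gap}^*_n=\min\{\mathrm{Gap}(S): S\subseteq\{Y_1,\dots,Y_{T_n}\},|S|=n\}$ (the best $n$ among all samples seen up to the $n$-th selection). Expectations are over the random sample sequence. *)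

theory Defs
  imports "HOL-Probability.Probability"
begin

text \<open>A realization of the sample sequence is y :: nat => real, with y 0 = Y_1, y 1 = Y_2, ...
  (0-based indexing). A threshold rule is given by X :: nat => real set (X j = the set used
  after j selections).\<close>

fun nsel :: "(nat \<Rightarrow> real set) \<Rightarrow> (nat \<Rightarrow> real) \<Rightarrow> nat \<Rightarrow> nat" where
  "nsel X y 0 = 0"
| "nsel X y (Suc t) = nsel X y t + (if y t \<in> X (nsel X y t) then 1 else 0)"

definition selected :: "(nat \<Rightarrow> real set) \<Rightarrow> (nat \<Rightarrow> real) \<Rightarrow> nat \<Rightarrow> bool" where
  "selected X y t \<longleftrightarrow> y t \<in> X (nsel X y t)"

text \<open>0-based index of the n-th selected sample (T_n - 1 in the paper's 1-based indexing).\<close>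
definition sel_time :: "(nat \<Rightarrow> real set) \<Rightarrow> (nat \<Rightarrow> real) \<Rightarrow> nat \<Rightarrow> nat" where
  "sel_time X y n = (LEAST t. nsel X y (Suc t) = n)"

definition sel_set :: "(nat \<Rightarrow> real set) \<Rightarrow> (nat \<Rightarrow> real) \<Rightarrow> nat \<Rightarrow> nat set" where
  "sel_set X y n = {t. t \<le> sel_time X y n \<and> selected X y t}"

definition gap_of :: "(nat \<Rightarrow> real) \<Rightarrow> nat set \<Rightarrow> real" where
  "gap_of y I = 1 - (\<Sum>i\<in>I. y i) / real (card I)"

definition Gap :: "(nat \<Rightarrow> real set) \<Rightarrow> (nat \<Rightarrow> real) \<Rightarrow> nat \<Rightarrow> real" where
  "Gap X y n = gap_of y (sel_set X y n)"

definition Gap_opt :: "(nat \<Rightarrow> real set) \<Rightarrow> (nat \<Rightarrow> real) \<Rightarrow> nat \<Rightarrow> real" where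
  "Gap_opt X y n = Min (gap_of y ` {I. I \<subseteq> {0..sel_time X y n} \<and> card I = n})"

definition pow_thr :: "real \<Rightarrow> nat \<Rightarrow> real set" where
  "pow_thr \<alpha> i = (if i = 0 then {0..1} else {y \<in> {0..1}. y \<ge> 1 - 1 / (real i powr \<alpha>)})"

end

theory Submission
  imports Defs
begin

text \<open>Write G = 1 - Y for the gap of a sample, \<mu> = E G, and c_j for the gap radius of the rule
  after j selections. The power law is self-similar: P(G \<le> c) = c^k and E[G; G \<le> c] = c^k c \<mu>.
  The number of selections made before sample t depends only on the earlier samples, hence is
  independent of Y_t; so the expected gap collected while exactly j samples are held is c_j \<mu> times
  the probability that a (j+1)-st selection happens, and n E[Gap_n] \<le> \<mu> \<Sigma>_{j<n} c_j.
  Conversely every sample rejected before the n-th selection has gap above c_{n-1}, so an exchange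
  argument bounds n Gap*_n below by the selected gaps truncated at c_{n-1}, with expectation
  n c_{n-1} \<mu> in the limit. The ratio is thus at most \<Sigma>_{j<n} c_j / (n c_{n-1}), which is at
  most 2 / (1 - \<alpha>) for c_j = j^(-\<alpha>), whatever k is.\<close>

section \<open>Counting selections\<close>

lemma nsel_mono: "s \<le> t \<Longrightarrow> nsel X y s \<le> nsel X y t"
  by (induction t) (auto simp: le_Suc_eq)

lemma nsel_prefix_cong: "(\<And>i. i < t \<Longrightarrow> y i = z i) \<Longrightarrow> nsel X y t = nsel X z t"
  by (induction t) auto

lemma card_selected_before:
  "card {s. s < N \<and> selected X y s \<and> nsel X y s < m} = min (nsel X y N) m"
proof (induction N)
  case (Suc N)
  let ?P = "\<lambda>s. selected X y s \<and> nsel X y s < m"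
  have "{s. s < Suc N \<and> ?P s} = {s. s < N \<and> ?P s} \<union> (if ?P N then {N} else {})"
    by (auto simp: less_Suc_eq)
  then show ?case
    using Suc by (auto simp: selected_def card_insert_if)
qed simp

lemma nsel_attains:
  assumes "n \<le> nsel X y N" and "1 \<le> n"
  shows "\<exists>t<N. nsel X y (Suc t) = n"
  using assms
proof (induction N)
  case (Suc N)
  show ?case
  proof (cases "n \<le> nsel X y N")
    case True
    then show ?thesis using Suc by (meson less_SucI)
  next
    case False
    then have "nsel X y (Suc N) = n" using Suc.prems by (auto split: if_splits)
    then show ?thesis by blast
  qed
qed simp

locale nth_selection_exists =
  fixes X :: "nat \<Rightarrow> real set" and y :: "nat \<Rightarrow> real" and n N :: nat
  assumes n_pos: "1 \<le> n" and nsel_N: "n \<le> nsel X y N"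
begin

abbreviation "T \<equiv> sel_time X y n"

lemma nsel_Suc_sel_time: "nsel X y (Suc T) = n" and sel_time_less: "T < N"
proof -
  obtain t where t: "t < N" "nsel X y (Suc t) = n"
    using nsel_attains[OF nsel_N n_pos] by blast
  show "nsel X y (Suc T) = n"
    unfolding sel_time_def by (rule LeastI[of _ t]) (use t in auto)
  have "T \<le> t" unfolding sel_time_def by (rule Least_le) (use t in auto)
  then show "T < N" using t by simp
qed

lemma nsel_sel_time: "nsel X y T = n - 1"
proof -
  have not_yet: "nsel X y (Suc s) \<noteq> n" if "s < T" for s
    using that unfolding sel_time_def by (rule not_less_Least)
  have "selected X y T"
  proof (rule ccontr)
    assume "\<not> selected X y T"
    then have "nsel X y T = n" using nsel_Suc_sel_time by (simp add: selected_def)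
    then show False using not_yet n_pos by (cases T) auto
  qed
  then show ?thesis using nsel_Suc_sel_time by (simp add: selected_def)
qed

lemma le_sel_time_iff: "t \<le> T \<longleftrightarrow> nsel X y t < n"
proof
  assume "t \<le> T"
  then show "nsel X y t < n" using nsel_mono[of t T X y] nsel_sel_time n_pos by simp
next
  assume "nsel X y t < n"
  then show "t \<le> T" using nsel_mono[of "Suc T" t X y] nsel_Suc_sel_time by (cases "t \<le> T") auto
qed

lemma sel_set_eq: "sel_set X y n = {t. selected X y t \<and> nsel X y t < n}"
  unfolding sel_set_def using le_sel_time_iff by auto

lemma sel_set_eq_before: "sel_set X y n = {t. t < N \<and> selected X y t \<and> nsel X y t < n}"
  unfolding sel_set_eq using le_sel_time_iff sel_time_less by (auto dest: le_less_trans)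

lemma card_sel_set: "card (sel_set X y n) = n"
  unfolding sel_set_eq_before card_selected_before using nsel_N by simp

lemma finite_sel_set: "finite (sel_set X y n)"
  unfolding sel_set_eq_before by simp


lemma Gap_opt_attained:
  obtains I where "I \<subseteq> {0..T}" "card I = n" "Gap_opt X y n = gap_of y I"
proof -
  define Fam where "Fam = {I. I \<subseteq> {0..T} \<and> card I = n}"
  have "finite Fam" unfolding Fam_def by (rule finite_subset[of _ "Pow {0..T}"]) auto
  moreover have "sel_set X y n \<subseteq> {0..T}" by (auto simp: sel_set_def)
  then have "sel_set X y n \<in> Fam" unfolding Fam_def using card_sel_set by blast
  ultimately have "Min (gap_of y ` Fam) \<in> gap_of y ` Fam" by (intro Min_in) auto
  then show ?thesis using that unfolding Gap_opt_def Fam_def by auto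
qed
end

section \<open>Pathwise bounds on the gaps\<close>

lemma gap_of_le_1: "(\<And>t. 0 \<le> y t) \<Longrightarrow> gap_of y I \<le> 1"
  unfolding gap_of_def by (simp add: sum_nonneg)

lemma gap_of_nonneg:
  assumes "\<And>t. y t \<le> 1"
  shows "0 \<le> gap_of y I"
proof (cases "finite I")
  case True
  have "sum y I \<le> real (card I)" using assms sum_mono[of I y "\<lambda>_. 1"] by simp
  then show ?thesis unfolding gap_of_def by (cases "card I = 0") (auto simp: divide_le_eq_1)
qed (simp add: gap_of_def)

lemma mult_gap_of: "finite I \<Longrightarrow> real (card I) * gap_of y I = (\<Sum>t\<in>I. 1 - y t)"
  unfolding gap_of_def by (cases "card I = 0") (auto simp: sum_subtractf algebra_simps)

definition collected_gap :: "(nat \<Rightarrow> real set) \<Rightarrow> (nat \<Rightarrow> real) \<Rightarrow> nat \<Rightarrow> nat \<Rightarrow> real" where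
  "collected_gap X y N j = (\<Sum>t<N. if nsel X y t = j \<and> y t \<in> X j then 1 - y t else 0)"

lemma weighted_sum_collected_gap:
  "(\<Sum>j<n. w j * collected_gap X y N j) =
     (\<Sum>t | t < N \<and> selected X y t \<and> nsel X y t < n. w (nsel X y t) * (1 - y t))"
proof -
  have "(\<Sum>j<n. w j * collected_gap X y N j) =
        (\<Sum>t<N. \<Sum>j<n. if nsel X y t = j \<and> y t \<in> X j then w j * (1 - y t) else 0)"
    unfolding collected_gap_def sum_distrib_left by (subst sum.swap) (simp add: if_distrib cong: if_cong)
  also have "\<dots> = (\<Sum>t<N. if selected X y t \<and> nsel X y t < n then w (nsel X y t) * (1 - y t) else 0)"
  proof (intro sum.cong refl)
    fix t
    have "(\<Sum>j<n. if nsel X y t = j \<and> y t \<in> X j then w j * (1 - y t) else 0) =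
          (\<Sum>j<n. if j = nsel X y t then (if y t \<in> X j then w j * (1 - y t) else 0) else 0)"
      by (intro sum.cong) auto
    then show "(\<Sum>j<n. if nsel X y t = j \<and> y t \<in> X j then w j * (1 - y t) else 0) =
          (if selected X y t \<and> nsel X y t < n then w (nsel X y t) * (1 - y t) else 0)"
      by (simp add: selected_def)
  qed
  also have "\<dots> = (\<Sum>t | t < N \<and> selected X y t \<and> nsel X y t < n. w (nsel X y t) * (1 - y t))"
    by (simp add: sum.If_cases Collect_conj_eq lessThan_def Int_assoc)
  finally show ?thesis .
qed

lemma Gap_le_collected_gap:
  assumes y01: "\<And>t. 0 \<le> y t \<and> y t \<le> 1" and n_pos: "1 \<le> n"
  shows "real n * Gap X y n \<le> (\<Sum>j<n. collected_gap X y N j) + (if nsel X y N < n then real n else 0)"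
proof (cases "nsel X y N < n")
  case True
  have "0 \<le> (\<Sum>j<n. collected_gap X y N j)"
    using weighted_sum_collected_gap[of "\<lambda>_. 1"] y01 by (simp add: sum_nonneg)
  moreover have "Gap X y n \<le> 1" unfolding Gap_def using y01 by (intro gap_of_le_1) auto
  then have "real n * Gap X y n \<le> real n" using mult_left_mono[of _ 1 "real n"] by simp
  ultimately have "real n * Gap X y n \<le> (\<Sum>j<n. collected_gap X y N j) + real n" by linarith
  with True show ?thesis by simp
next
  case False
  interpret nth_selection_exists X y n N using n_pos False by unfold_locales auto
  have "real n * Gap X y n = (\<Sum>t\<in>sel_set X y n. 1 - y t)"
    unfolding Gap_def using mult_gap_of[OF finite_sel_set] card_sel_set by simp
  also have "\<dots> = (\<Sum>j<n. collected_gap X y N j)"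
    using weighted_sum_collected_gap[of "\<lambda>_. 1"] by (simp add: sel_set_eq_before)
  finally show ?thesis using False by simp
qed

lemma sum_le_sum_exchange:
  fixes f :: "'a \<Rightarrow> real"
  assumes "finite I" "finite S" "card I = card S"
    and "\<And>t. t \<in> I - S \<Longrightarrow> f t = c" and "\<And>t. t \<in> S - I \<Longrightarrow> f t \<le> c"
  shows "sum f S \<le> sum f I"
proof -
  have card_diff: "card (S - I) = card (I - S)"
    using assms(1-3) by (metis card_Int_Diff Int_commute add_left_cancel)
  have "sum f S = sum f (S \<inter> I) + sum f (S - I)"
    using assms(2) by (metis sum.Int_Diff)
  also have "sum f (S - I) \<le> (\<Sum>t\<in>S - I. c)" using assms(5) by (intro sum_mono) auto
  also have "\<dots> = sum f (I - S)" using card_diff assms(4) by simp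
  also have "sum f (S \<inter> I) + sum f (I - S) = sum f I"
    using assms(1) by (metis Int_commute sum.Int_Diff)
  finally show ?thesis by simp
qed

lemma scaled_le_min:
  fixes g c d :: real
  assumes "0 \<le> g" "g \<le> d" "0 < c" "c \<le> d"
  shows "c / d * g \<le> min g c"
proof -
  have "c / d * g \<le> 1 * g" using assms by (intro mult_right_mono) auto
  moreover have "c / d * g \<le> c / d * d" using assms by (intro mult_left_mono) auto
  ultimately show ?thesis using assms by simp
qed

definition gap_threshold_rule :: "(nat \<Rightarrow> real) \<Rightarrow> nat \<Rightarrow> real set" where
  "gap_threshold_rule r j = {y. 0 \<le> 1 - y \<and> 1 - y \<le> r j}"

text \<open>A sample rejected before the n-th selection has gap above the current radius, hence above
  r (n - 1); so exchanging the selected samples against an optimal n-set only increases the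
  gaps truncated at r (n - 1).\<close>
lemma Gap_opt_ge_weighted_collected_gap:
  fixes r :: "nat \<Rightarrow> real"
  defines "X \<equiv> gap_threshold_rule r"
  assumes y01: "\<And>t. 0 \<le> y t \<and> y t \<le> 1" and n_pos: "1 \<le> n"
    and r_pos: "\<And>j. 0 < r j" and r_dec: "decseq r" and nsel_N: "n \<le> nsel X y N'"
  shows "(\<Sum>j<n. r (n - 1) / r j * collected_gap X y N j) \<le> real n * Gap_opt X y n"
proof -
  interpret nth_selection_exists X y n N' using n_pos nsel_N by unfold_locales
  let ?c = "r (n - 1)"
  define m where "m t = min (1 - y t) ?c" for t
  let ?S = "sel_set X y n"
  obtain I where I: "I \<subseteq> {0..T}" "card I = n" and opt: "Gap_opt X y n = gap_of y I"
    by (rule Gap_opt_attained)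
  have fin_I: "finite I" using I(1) by (rule finite_subset) simp
  have radius_le: "?c \<le> r (nsel X y t)" if "nsel X y t < n" for t
    using r_dec that by (simp add: decseq_def)
  have "(\<Sum>j<n. ?c / r j * collected_gap X y N j) =
        (\<Sum>t | t < N \<and> selected X y t \<and> nsel X y t < n. ?c / r (nsel X y t) * (1 - y t))"
    by (rule weighted_sum_collected_gap)
  also have "\<dots> \<le> (\<Sum>t | t < N \<and> selected X y t \<and> nsel X y t < n. m t)"
  proof (rule sum_mono)
    fix t assume t: "t \<in> {t. t < N \<and> selected X y t \<and> nsel X y t < n}"
    then have "0 \<le> 1 - y t" "1 - y t \<le> r (nsel X y t)"
      by (auto simp: selected_def X_def gap_threshold_rule_def)
    then show "?c / r (nsel X y t) * (1 - y t) \<le> m t"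
      unfolding m_def using t radius_le r_pos by (intro scaled_le_min) auto
  qed
  also have "\<dots> \<le> sum m ?S"
    using y01 r_pos[of "n - 1"] by (intro sum_mono2 finite_sel_set) (auto simp: sel_set_eq m_def)
  also have "\<dots> \<le> sum m I"
  proof (rule sum_le_sum_exchange[OF fin_I finite_sel_set])
    show "card I = card ?S" using I(2) card_sel_set by simp
    show "m t \<le> ?c" if "t \<in> ?S - I" for t unfolding m_def by simp
    show "m t = ?c" if t: "t \<in> I - ?S" for t
    proof -
      have "t \<le> T" using t I(1) by auto
      then have "\<not> selected X y t" and "nsel X y t < n"
        using t le_sel_time_iff by (auto simp: sel_set_def)
      then have "?c < 1 - y t"
        using y01[of t] radius_le[of t] by (auto simp: selected_def X_def gap_threshold_rule_def)
      then show ?thesis unfolding m_def by simp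
    qed
  qed
  also have "\<dots> \<le> (\<Sum>t\<in>I. 1 - y t)" unfolding m_def by (intro sum_mono) auto
  also have "\<dots> = real n * Gap_opt X y n"
    unfolding opt using mult_gap_of[OF fin_I] I(2) by simp
  finally show ?thesis .
qed

section \<open>Power-law radii\<close>

text \<open>The radius 1 at j = 0 encodes X_0 = [0,1]; it also avoids the junk value 1 / 0 powr \<alpha> = 0.\<close>
definition pow_radius :: "real \<Rightarrow> nat \<Rightarrow> real" where
  "pow_radius \<alpha> j = (if j = 0 then 1 else 1 / real j powr \<alpha>)"

lemma pow_radius_pos: "0 < pow_radius \<alpha> j"
  by (simp add: pow_radius_def)

lemma pow_radius_le_1: "0 \<le> \<alpha> \<Longrightarrow> pow_radius \<alpha> j \<le> 1"
  by (auto simp: pow_radius_def ge_one_powr_ge_zero)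

lemma decseq_pow_radius: "0 \<le> \<alpha> \<Longrightarrow> decseq (pow_radius \<alpha>)"
  unfolding decseq_def
  by (auto simp: pow_radius_def ge_one_powr_ge_zero frac_le powr_mono2)

lemma pow_thr_eq_gap_threshold_rule:
  assumes "0 \<le> \<alpha>"
  shows "pow_thr \<alpha> = gap_threshold_rule (pow_radius \<alpha>)"
proof
  fix j
  have "1 - y \<le> pow_radius \<alpha> j \<Longrightarrow> 0 \<le> y" for y
    using pow_radius_le_1[OF assms, of j] by linarith
  then show "pow_thr \<alpha> j = gap_threshold_rule (pow_radius \<alpha>) j"
    by (auto simp: pow_thr_def gap_threshold_rule_def pow_radius_def)
qed

text \<open>By Young's inequality m powr (1 - \<alpha>) * (m + 1) powr \<alpha> \<le> (1 - \<alpha>) m + \<alpha> (m + 1).\<close>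
lemma powr_increment_ge:
  fixes m :: nat and \<alpha> :: real
  assumes "0 \<le> \<alpha>" and "\<alpha> < 1"
  shows "(1 - \<alpha>) * real (Suc m) powr (-\<alpha>) \<le> real (Suc m) powr (1 - \<alpha>) - real m powr (1 - \<alpha>)"
proof (cases "m = 0")
  case True then show ?thesis using assms by simp
next
  case False
  let ?r = "1 - \<alpha>" and ?m' = "real (Suc m)"
  have "real m powr ?r * ?m' powr \<alpha> \<le> ?r * real m + \<alpha> * ?m'"
    using Youngs_inequality_0[of ?r \<alpha> "real m" ?m'] assms False by simp
  also have "\<dots> = ?m' - ?r" by (simp add: algebra_simps)
  finally have "real m powr ?r \<le> ?m' / ?m' powr \<alpha> - ?r / ?m' powr \<alpha>"
    by (simp add: pos_le_divide_eq diff_divide_distrib[symmetric])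
  also have "?m' / ?m' powr \<alpha> = ?m' powr ?r" by (simp add: powr_diff)
  also have "?r / ?m' powr \<alpha> = ?r * ?m' powr (-\<alpha>)" by (simp add: powr_minus_divide)
  finally show ?thesis by simp
qed

lemma sum_powr_neg_le:
  fixes \<alpha> :: real
  assumes "0 \<le> \<alpha>" and "\<alpha> < 1"
  shows "(1 - \<alpha>) * (\<Sum>j<m. real (Suc j) powr (-\<alpha>)) \<le> real m powr (1 - \<alpha>)"
proof (induction m)
  case (Suc m)
  then show ?case using powr_increment_ge[OF assms, of m] by (simp add: algebra_simps)
qed simp

lemma sum_pow_radius_le:
  fixes \<alpha> :: real
  assumes a0: "0 \<le> \<alpha>" and a1: "\<alpha> < 1" and n_pos: "1 \<le> n"
  shows "(\<Sum>j<n. pow_radius \<alpha> j) \<le> 2 / (1 - \<alpha>) * (real n * pow_radius \<alpha> (n - 1))"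
proof -
  obtain m where n: "n = Suc m" using n_pos by (cases n) auto
  let ?r = "1 - \<alpha>"
  have r: "0 < ?r" "?r \<le> 1" using a0 a1 by auto
  have sum_eq: "(\<Sum>j<n. pow_radius \<alpha> j) = 1 + (\<Sum>j<m. real (Suc j) powr (-\<alpha>))"
    unfolding n sum.lessThan_Suc_shift by (simp add: pow_radius_def powr_minus_divide)
  show ?thesis
  proof (cases "m = 0")
    case True
    then show ?thesis using sum_eq n r by (simp add: pow_radius_def field_simps)
  next
    case False
    let ?q = "real m powr (-\<alpha>)"
    have m1: "1 \<le> real m" using False by simp
    have radius: "pow_radius \<alpha> (n - 1) = ?q" using False n by (simp add: pow_radius_def powr_minus_divide)
    have mq: "real m powr ?r = real m * ?q" using m1 by (simp add: powr_mult_base)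
    have "1 \<le> real m * ?q" using ge_one_powr_ge_zero[OF m1, of ?r] r mq by simp
    moreover have "?r * (\<Sum>j<n. pow_radius \<alpha> j) \<le> ?r + real m * ?q"
      using sum_eq sum_powr_neg_le[OF a0 a1, of m] mq by (simp add: algebra_simps)
    moreover have "real m * ?q \<le> real n * ?q" using n by (simp add: mult_right_mono)
    ultimately have "?r * (\<Sum>j<n. pow_radius \<alpha> j) \<le> 2 * (real n * pow_radius \<alpha> (n - 1))"
      using r unfolding radius by linarith
    then show ?thesis using r by (simp add: field_simps)
  qed
qed

section \<open>Probabilistic model\<close>

lemma nsel_measurable:
  assumes "\<And>i. i < t \<Longrightarrow> (\<lambda>\<omega>. f \<omega> i) \<in> borel_measurable N"
    and "\<And>j. X j \<in> sets borel"
  shows "(\<lambda>\<omega>. nsel X (f \<omega>) t) \<in> measurable N (count_space UNIV)"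
  using assms(1)
proof (induction t)
  case (Suc t)
  have f_t: "(\<lambda>\<omega>. f \<omega> t) \<in> borel_measurable N" using Suc.prems by simp
  have step: "(\<lambda>\<omega>. j + (if f \<omega> t \<in> X j then 1 else 0)) \<in> measurable N (count_space UNIV)" for j :: nat
  proof -
    have "(\<lambda>\<omega>. j + (if f \<omega> t \<in> X j then 1 else 0)) = (\<lambda>\<omega>. if f \<omega> t \<in> X j then j + 1 else j)"
      by auto
    then show ?thesis using measurable_sets[OF f_t assms(2)[of j]]
      by (simp add: measurable_If vimage_def Int_def conj_commute)
  qed
  have "(\<lambda>\<omega>. (\<lambda>j \<omega>. j + (if f \<omega> t \<in> X j then 1 else 0)) (nsel X (f \<omega>) t) \<omega>)
        \<in> measurable N (count_space UNIV)"
    using Suc by (intro measurable_compose_countable'[OF step]) auto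
  then show ?case by simp
qed simp

lemma leaking_sequence_tendsto_0:
  fixes A B P :: "nat \<Rightarrow> real"
  assumes split: "\<And>N. A N = B N + P N" and step: "\<And>N. A (Suc N) = B N + (1 - s) * P N"
    and "\<And>N. 0 \<le> P N" and "\<And>N. 0 \<le> B N" and "0 < s" and "B \<longlonglongrightarrow> 0"
  shows "A \<longlonglongrightarrow> 0"
proof -
  have "decseq A"
  proof (rule decseq_SucI)
    fix N
    have "(1 - s) * P N \<le> P N" using assms(3)[of N] \<open>0 < s\<close> by (simp add: algebra_simps)
    then show "A (Suc N) \<le> A N" using split[of N] step[of N] by simp
  qed
  moreover have "\<forall>N. 0 \<le> A N" using assms by simp
  ultimately obtain L where L: "A \<longlonglongrightarrow> L" using decseq_convergent by blast
  have "(\<lambda>N. A (Suc N) - (1 - s) * A N) \<longlonglongrightarrow> L - (1 - s) * L"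
    by (intro tendsto_intros LIMSEQ_Suc L)
  moreover have "(\<lambda>N. A (Suc N) - (1 - s) * A N) = (\<lambda>N. s * B N)"
    using split step by (simp add: algebra_simps)
  moreover have "(\<lambda>N. s * B N) \<longlonglongrightarrow> s * 0" by (intro tendsto_intros assms)
  ultimately have "L - (1 - s) * L = s * 0" using LIMSEQ_unique by metis
  then show ?thesis using L \<open>0 < s\<close> by (simp add: algebra_simps)
qed

locale power_law_selection = prob_space M for M :: "'a measure" +
  fixes k :: real and r :: "nat \<Rightarrow> real" and Y :: "nat \<Rightarrow> 'a \<Rightarrow> real"
  assumes r_pos: "\<And>j. 0 < r j" and r_le_1: "\<And>j. r j \<le> 1" and r_dec: "decseq r"
    and Y_measurable[measurable]: "\<And>i. Y i \<in> borel_measurable M"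
    and indep_Y: "indep_vars (\<lambda>_. borel) Y UNIV"
    and gap_cdf: "\<And>i x. 0 \<le> x \<Longrightarrow> x \<le> 1 \<Longrightarrow> prob {\<omega> \<in> space M. 1 - Y i \<omega> \<le> x} = x powr k"
begin

abbreviation "X \<equiv> gap_threshold_rule r"

definition held :: "nat \<Rightarrow> 'a \<Rightarrow> nat" where
  "held t \<omega> = nsel X (\<lambda>i. Y i \<omega>) t"

definition mean_gap :: real where
  "mean_gap = (\<integral>\<omega>. 1 - Y 0 \<omega> \<partial>M)"

lemma X_borel[measurable]: "X j \<in> sets borel"
  unfolding gap_threshold_rule_def by measurable

lemma held_measurable[measurable]: "held t \<in> measurable M (count_space UNIV)"
  unfolding held_def by (rule nsel_measurable) auto

lemma held_Suc: "held (Suc t) \<omega> = held t \<omega> + (if Y t \<omega> \<in> X (held t \<omega>) then 1 else 0)"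
  unfolding held_def by simp

lemma integral_indicator_held:
  "(\<integral>\<omega>. indicator A (held t \<omega>) \<partial>M) = prob {\<omega> \<in> space M. held t \<omega> \<in> A}"
proof -
  have "(\<integral>\<omega>. indicator A (held t \<omega>) \<partial>M) = (\<integral>\<omega>. indicator {\<omega> \<in> space M. held t \<omega> \<in> A} \<omega> \<partial>M)"
    by (intro Bochner_Integration.integral_cong) (auto simp: indicator_def)
  also have "\<dots> = prob ({\<omega> \<in> space M. held t \<omega> \<in> A} \<inter> space M)"
    by (rule Bochner_Integration.integral_indicator)
  finally show ?thesis by (simp add: Int_absorb2)
qed

lemma prob_gap_le:
  "prob {\<omega> \<in> space M. 1 - Y i \<omega> \<le> z} = (if z < 0 then 0 else if z \<le> 1 then z powr k else 1)"
proof -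
  consider "z < 0" | "0 \<le> z" "z \<le> 1" | "1 < z" by linarith
  then show ?thesis
  proof cases
    case 1
    then have "prob {\<omega> \<in> space M. 1 - Y i \<omega> \<le> z} \<le> prob {\<omega> \<in> space M. 1 - Y i \<omega> \<le> 0}"
      by (intro finite_measure_mono) auto
    then show ?thesis using 1 gap_cdf[of 0 i] measure_nonneg[of M] by (simp add: antisym)
  next
    case 2
    then show ?thesis using gap_cdf by simp
  next
    case 3
    then have "prob {\<omega> \<in> space M. 1 - Y i \<omega> \<le> 1} \<le> prob {\<omega> \<in> space M. 1 - Y i \<omega> \<le> z}"
      by (intro finite_measure_mono) auto
    then show ?thesis using 3 gap_cdf[of 1 i] prob_le_1 by (simp add: antisym)
  qed
qed

lemma prob_gap_Ioc:
  assumes "a \<le> b"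
  shows "prob {\<omega> \<in> space M. a < 1 - Y i \<omega> \<and> 1 - Y i \<omega> \<le> b} =
           prob {\<omega> \<in> space M. 1 - Y i \<omega> \<le> b} - prob {\<omega> \<in> space M. 1 - Y i \<omega> \<le> a}"
proof -
  have "{\<omega> \<in> space M. a < 1 - Y i \<omega> \<and> 1 - Y i \<omega> \<le> b} =
        {\<omega> \<in> space M. 1 - Y i \<omega> \<le> b} - {\<omega> \<in> space M. 1 - Y i \<omega> \<le> a}" by auto
  then show ?thesis using assms by (simp add: finite_measure_Diff subset_eq)
qed

lemma prob_gap_between:
  assumes "0 \<le> c" "c \<le> 1"
  shows "prob {\<omega> \<in> space M. 0 \<le> 1 - Y i \<omega> \<and> 1 - Y i \<omega> \<le> c} = c powr k"
proof -
  have "prob {\<omega> \<in> space M. 1 - Y i \<omega> < 0} \<le> prob {\<omega> \<in> space M. 1 - Y i \<omega> \<le> 0}"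
    by (intro finite_measure_mono) auto
  then have neg: "prob {\<omega> \<in> space M. 1 - Y i \<omega> < 0} = 0"
    using gap_cdf[of 0 i] measure_nonneg[of M] by (simp add: antisym)
  have "{\<omega> \<in> space M. 0 \<le> 1 - Y i \<omega> \<and> 1 - Y i \<omega> \<le> c} =
        {\<omega> \<in> space M. 1 - Y i \<omega> \<le> c} - {\<omega> \<in> space M. 1 - Y i \<omega> < 0}" by auto
  then show ?thesis using assms neg gap_cdf[OF assms, of i] by (simp add: finite_measure_Diff subset_eq)
qed

lemma AE_Y_01: "AE \<omega> in M. \<forall>i. 0 \<le> Y i \<omega> \<and> Y i \<omega> \<le> 1"
proof -
  have "AE \<omega> in M. 0 \<le> Y i \<omega> \<and> Y i \<omega> \<le> 1" for i
    using AE_prob_1[of "{\<omega> \<in> space M. 0 \<le> 1 - Y i \<omega> \<and> 1 - Y i \<omega> \<le> 1}"] prob_gap_between[of 1 i]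
    by auto
  then show ?thesis by (simp add: AE_all_countable)
qed

lemma mean_gap_nonneg: "0 \<le> mean_gap"
  unfolding mean_gap_def by (rule integral_nonneg_AE) (use AE_Y_01 in auto)

lemma integral_indicator_X: "(\<integral>\<omega>. indicator (X j) (Y t \<omega>) \<partial>M) = r j powr k"
proof -
  have "(\<integral>\<omega>. indicator (X j) (Y t \<omega>) \<partial>M) = (\<integral>\<omega>. indicator {\<omega> \<in> space M. Y t \<omega> \<in> X j} \<omega> \<partial>M)"
    by (intro Bochner_Integration.integral_cong) (auto simp: indicator_def)
  also have "\<dots> = prob ({\<omega> \<in> space M. Y t \<omega> \<in> X j} \<inter> space M)"
    by (rule Bochner_Integration.integral_indicator)
  also have "\<dots> = prob {\<omega> \<in> space M. 0 \<le> 1 - Y t \<omega> \<and> 1 - Y t \<omega> \<le> r j}"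
    by (intro arg_cong[where f = prob]) (auto simp: gap_threshold_rule_def)
  also have "\<dots> = r j powr k" using r_pos[of j] r_le_1[of j] by (intro prob_gap_between) auto
  finally show ?thesis .
qed

definition truncated_tail :: "real \<Rightarrow> real \<Rightarrow> real" where
  "truncated_tail c x = (if x < 0 then c powr k else if x < c then c powr k - x powr k else 0)"

lemma emeasure_truncated_gap_greaterThan:
  assumes c: "0 < c" "c \<le> 1"
  shows "emeasure (density (distr M borel (\<lambda>\<omega>. 1 - Y t \<omega>)) (\<lambda>y. ennreal (indicator {0<..c} y))) {x<..} =
           ennreal (truncated_tail c x)"
proof -
  define u where "u = max 0 x"
  have "emeasure (density (distr M borel (\<lambda>\<omega>. 1 - Y t \<omega>)) (\<lambda>y. ennreal (indicator {0<..c} y))) {x<..} =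
        (\<integral>\<^sup>+y. ennreal (indicator {0<..c} y) * indicator {x<..} y \<partial>distr M borel (\<lambda>\<omega>. 1 - Y t \<omega>))"
    by (rule emeasure_density) auto
  also have "\<dots> = emeasure (distr M borel (\<lambda>\<omega>. 1 - Y t \<omega>)) {u<..c}"
    by (subst nn_integral_indicator[symmetric], simp, intro nn_integral_cong)
       (auto simp: indicator_def u_def)
  also have "\<dots> = prob {\<omega> \<in> space M. u < 1 - Y t \<omega> \<and> 1 - Y t \<omega> \<le> c}"
    by (subst emeasure_distr) (auto simp: emeasure_eq_measure vimage_def Int_def conj_commute)
  also have "\<dots> = truncated_tail c x"
  proof (cases "u < c")
    case True
    then have u01: "0 \<le> u" "u \<le> 1" and "x < c" using c by (auto simp: u_def)
    have "prob {\<omega> \<in> space M. u < 1 - Y t \<omega> \<and> 1 - Y t \<omega> \<le> c} = c powr k - u powr k"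
      using prob_gap_Ioc[of u c t] prob_gap_le[of t c] prob_gap_le[of t u] u01 True c by simp
    then show ?thesis using \<open>x < c\<close> by (simp add: truncated_tail_def u_def max_def)
  next
    case False
    then have "{\<omega> \<in> space M. u < 1 - Y t \<omega> \<and> 1 - Y t \<omega> \<le> c} = {}" by auto
    moreover have "truncated_tail c x = 0" using False c by (auto simp: truncated_tail_def u_def)
    ultimately show ?thesis by (metis measure_empty)
  qed
  finally show ?thesis .
qed

lemma emeasure_scaled_gap_greaterThan:
  assumes c: "0 < c" "c \<le> 1"
  shows "emeasure (density (distr M borel (\<lambda>\<omega>. c * (1 - Y 0 \<omega>))) (\<lambda>_. ennreal (c powr k))) {x<..} =
           ennreal (truncated_tail c x)"
proof -
  let ?F = "prob {\<omega> \<in> space M. 1 - Y 0 \<omega> \<le> x / c}"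
  have "emeasure (density (distr M borel (\<lambda>\<omega>. c * (1 - Y 0 \<omega>))) (\<lambda>_. ennreal (c powr k))) {x<..} =
        ennreal (c powr k) * emeasure (distr M borel (\<lambda>\<omega>. c * (1 - Y 0 \<omega>))) {x<..}"
    by (subst emeasure_density) (auto intro: nn_integral_cmult_indicator)
  also have "emeasure (distr M borel (\<lambda>\<omega>. c * (1 - Y 0 \<omega>))) {x<..} =
             emeasure M (space M - {\<omega> \<in> space M. 1 - Y 0 \<omega> \<le> x / c})"
    using c by (subst emeasure_distr) (auto intro!: arg_cong[where f = "emeasure M"] simp: field_simps)
  also have "\<dots> = ennreal (1 - ?F)"
    by (subst emeasure_eq_measure, subst prob_compl) auto
  also have "ennreal (c powr k) * ennreal (1 - ?F) = ennreal (c powr k * (1 - ?F))"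
    by (rule ennreal_mult''[symmetric]) simp
  also have "c powr k * (1 - ?F) = truncated_tail c x"
  proof -
    consider "x < 0" | "0 \<le> x" "x < c" | "c \<le> x" by linarith
    then show ?thesis
    proof cases
      case 1
      then have "x / c < 0" using c by (simp add: divide_neg_pos)
      then show ?thesis using 1 prob_gap_le[of 0 "x / c"] by (simp add: truncated_tail_def)
    next
      case 2
      then have "0 \<le> x / c" "x / c \<le> 1" using c by auto
      then have "?F = (x / c) powr k" using prob_gap_le[of 0 "x / c"] by (simp add: not_less)
      also have "\<dots> = x powr k / c powr k" using 2 c by (simp add: powr_divide)
      finally show ?thesis using 2 c by (simp add: truncated_tail_def right_diff_distrib)
    next
      case 3
      then have "1 \<le> x / c" using c by simp
      then have "?F = 1" using prob_gap_le[of 0 "x / c"] by (cases "x / c = 1") auto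
      then show ?thesis using 3 c by (simp add: truncated_tail_def)
    qed
  qed
  finally show ?thesis .
qed

text \<open>Self-similarity of the power law: conditioned on 1 - Y t \<le> c, an event of probability
  c powr k, the gap is distributed as c (1 - Y 0). Both sides are means of measures with tail
  function truncated_tail c.\<close>
lemma integral_truncated_gap:
  assumes c: "0 < c" "c \<le> 1"
  shows "(\<integral>\<omega>. indicator {0<..c} (1 - Y t \<omega>) * (1 - Y t \<omega>) \<partial>M) = c powr k * c * mean_gap"
proof -
  let ?G = "distr M borel (\<lambda>\<omega>. 1 - Y t \<omega>)" and ?H = "distr M borel (\<lambda>\<omega>. c * (1 - Y 0 \<omega>))"
  have "density ?G (\<lambda>y. ennreal (indicator {0<..c} y)) = density ?H (\<lambda>_. ennreal (c powr k))"
    using emeasure_truncated_gap_greaterThan[OF c] emeasure_scaled_gap_greaterThan[OF c]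
    by (intro measure_eqI_lessThan) auto
  then have "(\<integral>y. y \<partial>density ?G (\<lambda>y. ennreal (indicator {0<..c} y))) = (\<integral>y. y \<partial>density ?H (\<lambda>_. ennreal (c powr k)))"
    by simp
  moreover have "(\<integral>y. y \<partial>density ?G (\<lambda>y. ennreal (indicator {0<..c} y))) =
                 (\<integral>\<omega>. indicator {0<..c} (1 - Y t \<omega>) * (1 - Y t \<omega>) \<partial>M)"
    by (subst integral_density) (auto simp: integral_distr)
  moreover have "(\<integral>y. y \<partial>density ?H (\<lambda>_. ennreal (c powr k))) = c powr k * c * mean_gap"
    by (subst integral_density) (auto simp: integral_distr mean_gap_def)
  ultimately show ?thesis by simp
qed

lemma integral_gap_selected:
  "(\<integral>\<omega>. (1 - Y t \<omega>) * indicator (X j) (Y t \<omega>) \<partial>M) = r j powr k * r j * mean_gap"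
proof -
  have "(\<integral>\<omega>. (1 - Y t \<omega>) * indicator (X j) (Y t \<omega>) \<partial>M) =
        (\<integral>\<omega>. indicator {0<..r j} (1 - Y t \<omega>) * (1 - Y t \<omega>) \<partial>M)"
    by (intro Bochner_Integration.integral_cong) (auto simp: indicator_def gap_threshold_rule_def)
  also have "\<dots> = r j powr k * r j * mean_gap"
    using r_pos r_le_1 by (intro integral_truncated_gap)
  finally show ?thesis .
qed

lemma integrable_held_Y:
  fixes h :: "real \<Rightarrow> real"
  assumes [measurable]: "h \<in> borel_measurable borel" and "\<And>y. \<bar>h y\<bar> \<le> B"
  shows "integrable M (\<lambda>\<omega>. indicator A (held t \<omega>) * h (Y t \<omega>))"
  using assms(2) order_trans[OF abs_ge_zero assms(2)]
  by (intro integrable_const_bound[where B = B]) (auto simp: indicator_def abs_mult)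

text \<open>held t is a function of Y 0, ..., Y (t - 1) alone, hence independent of Y t.\<close>
lemma integral_held_mult_Y:
  assumes [measurable]: "h \<in> borel_measurable borel" and h_bounded: "\<And>y. \<bar>h y\<bar> \<le> B"
  shows "(\<integral>\<omega>. indicator {j} (held t \<omega>) * h (Y t \<omega>) \<partial>M) =
           prob {\<omega> \<in> space M. held t \<omega> = j} * (\<integral>\<omega>. h (Y t \<omega>) \<partial>M)"
proof -
  define past where "past v = (indicator {j} (nsel X v t) :: real)" for v :: "nat \<Rightarrow> real"
  define present where "present v = h (v t)" for v :: "nat \<Rightarrow> real"
  have "(\<lambda>v. nsel X v t) \<in> measurable (PiM {..<t} (\<lambda>_. borel)) (count_space UNIV)"
    by (rule nsel_measurable) auto
  then have "past \<in> borel_measurable (PiM {..<t} (\<lambda>_. borel))"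
    unfolding past_def by (rule measurable_compose) simp
  moreover have "present \<in> borel_measurable (PiM {t} (\<lambda>_. borel))"
    unfolding present_def by measurable
  ultimately have "indep_var borel (past \<circ> (\<lambda>\<omega>. restrict (\<lambda>i. Y i \<omega>) {..<t}))
                             borel (present \<circ> (\<lambda>\<omega>. restrict (\<lambda>i. Y i \<omega>) {t}))"
    by (intro indep_var_compose[OF indep_var_restrict[OF indep_Y]]) auto
  moreover have "past \<circ> (\<lambda>\<omega>. restrict (\<lambda>i. Y i \<omega>) {..<t}) = (\<lambda>\<omega>. indicator {j} (held t \<omega>))"
    unfolding past_def held_def comp_def
    by (intro ext arg_cong[where f = "indicator {j}"] nsel_prefix_cong) auto
  moreover have "present \<circ> (\<lambda>\<omega>. restrict (\<lambda>i. Y i \<omega>) {t}) = (\<lambda>\<omega>. h (Y t \<omega>))"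
    unfolding present_def by auto
  ultimately have indep: "indep_var borel (\<lambda>\<omega>. indicator {j} (held t \<omega>) :: real) borel (\<lambda>\<omega>. h (Y t \<omega>))"
    by simp
  have "integrable M (\<lambda>\<omega>. indicator {j} (held t \<omega>) * 1 :: real)"
    by (rule integrable_held_Y[of _ 1]) auto
  moreover have "integrable M (\<lambda>\<omega>. h (Y t \<omega>))"
    using h_bounded by (intro integrable_const_bound[where B = B]) auto
  ultimately show ?thesis
    using indep_var_lebesgue_integral[OF indep] integral_indicator_held[of "{j}" t] by simp
qed

lemma integral_held_selects:
  "(\<integral>\<omega>. indicator {j} (held t \<omega>) * indicator (X j) (Y t \<omega>) \<partial>M) =
     prob {\<omega> \<in> space M. held t \<omega> = j} * r j powr k"
  using integral_held_mult_Y[of "indicator (X j)" 1 j t] integral_indicator_X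
  by (simp add: indicator_def)

lemma sum_held_selects:
  "(\<Sum>t<N. indicator {j} (held t \<omega>) * indicator (X j) (Y t \<omega>)) = (indicator {j<..} (held N \<omega>) :: real)"
proof (induction N)
  case (Suc N)
  then show ?case
    by (cases "held N \<omega> = j") (auto simp: held_Suc indicator_def)
qed (simp add: held_def)

lemma collected_gap_eq_sum:
  "collected_gap X (\<lambda>i. Y i \<omega>) N j =
     (\<Sum>t<N. indicator {j} (held t \<omega>) * ((1 - Y t \<omega>) * indicator (X j) (Y t \<omega>)))"
  unfolding collected_gap_def held_def by (intro sum.cong) (auto simp: indicator_def)

lemma gap_selected_bounded: "\<bar>(1 - y) * indicator (X j) y\<bar> \<le> (1 :: real)"
  using r_le_1[of j] by (auto simp: indicator_def gap_threshold_rule_def)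

lemma integrable_collected_gap: "integrable M (\<lambda>\<omega>. collected_gap X (\<lambda>i. Y i \<omega>) N j)"
  unfolding collected_gap_eq_sum
  by (intro Bochner_Integration.integrable_sum integrable_held_Y[OF _ gap_selected_bounded]) simp

lemma integral_collected_gap:
  "(\<integral>\<omega>. collected_gap X (\<lambda>i. Y i \<omega>) N j \<partial>M) = r j * mean_gap * prob {\<omega> \<in> space M. j < held N \<omega>}"
proof -
  have "(\<integral>\<omega>. collected_gap X (\<lambda>i. Y i \<omega>) N j \<partial>M) =
        (\<Sum>t<N. \<integral>\<omega>. indicator {j} (held t \<omega>) * ((1 - Y t \<omega>) * indicator (X j) (Y t \<omega>)) \<partial>M)"
    unfolding collected_gap_eq_sum
    by (intro Bochner_Integration.integral_sum integrable_held_Y[OF _ gap_selected_bounded]) simp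
  also have "\<dots> = (\<Sum>t<N. prob {\<omega> \<in> space M. held t \<omega> = j} * (r j powr k * r j * mean_gap))"
  proof (rule sum.cong[OF refl])
    fix t
    show "(\<integral>\<omega>. indicator {j} (held t \<omega>) * ((1 - Y t \<omega>) * indicator (X j) (Y t \<omega>)) \<partial>M) =
          prob {\<omega> \<in> space M. held t \<omega> = j} * (r j powr k * r j * mean_gap)"
      using integral_held_mult_Y[of "\<lambda>y. (1 - y) * indicator (X j) y" 1 j t] gap_selected_bounded
      unfolding integral_gap_selected by simp
  qed
  also have "\<dots> = r j * mean_gap * (\<Sum>t<N. prob {\<omega> \<in> space M. held t \<omega> = j} * r j powr k)"
    by (simp add: sum_distrib_left algebra_simps)
  also have "(\<Sum>t<N. prob {\<omega> \<in> space M. held t \<omega> = j} * r j powr k) =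
             (\<integral>\<omega>. (\<Sum>t<N. indicator {j} (held t \<omega>) * indicator (X j) (Y t \<omega>)) \<partial>M)"
    unfolding integral_held_selects[symmetric]
    by (intro Bochner_Integration.integral_sum[symmetric] integrable_held_Y[of _ 1]) auto
  finally show ?thesis
    unfolding sum_held_selects integral_indicator_held by simp
qed

lemma prob_held_less_tendsto_0: "(\<lambda>N. prob {\<omega> \<in> space M. held N \<omega> < j}) \<longlonglongrightarrow> 0"
proof (induction j)
  case (Suc j)
  let ?less = "\<lambda>j N. prob {\<omega> \<in> space M. held N \<omega> < j}"
  let ?at = "\<lambda>N. prob {\<omega> \<in> space M. held N \<omega> = j}"
  let ?s = "r j powr k"
  have int: "integrable M (\<lambda>\<omega>. indicator A (held N \<omega>) * h (Y N \<omega>))"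
    if "h \<in> borel_measurable borel" "\<And>y. \<bar>h y\<bar> \<le> 1" for A N and h :: "real \<Rightarrow> real"
    using that by (rule integrable_held_Y)
  show ?case
  proof (rule leaking_sequence_tendsto_0[of "?less (Suc j)" "?less j" ?at ?s])
    fix N
    have "(\<lambda>\<omega>. indicator {..<Suc j} (held N \<omega>) :: real) =
          (\<lambda>\<omega>. indicator {..<j} (held N \<omega>) * 1 + indicator {j} (held N \<omega>) * 1)"
      by (auto simp: indicator_def)
    then have "(\<integral>\<omega>. indicator {..<Suc j} (held N \<omega>) \<partial>M) = ?less j N + ?at N"
      using int[of "\<lambda>_. 1"]
      by (simp add: Bochner_Integration.integral_add integral_indicator_held)
    then show "?less (Suc j) N = ?less j N + ?at N"
      by (simp add: integral_indicator_held)
    have "(\<lambda>\<omega>. indicator {..<Suc j} (held (Suc N) \<omega>) :: real) =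
          (\<lambda>\<omega>. indicator {..<j} (held N \<omega>) * 1 + (indicator {j} (held N \<omega>) * 1
                  - indicator {j} (held N \<omega>) * indicator (X j) (Y N \<omega>)))"
    proof
      fix \<omega>
      show "indicator {..<Suc j} (held (Suc N) \<omega>) = indicator {..<j} (held N \<omega>) * 1 +
              (indicator {j} (held N \<omega>) * 1 - indicator {j} (held N \<omega>) * indicator (X j) (Y N \<omega>) :: real)"
        by (cases "held N \<omega> < j"; cases "held N \<omega> = j") (auto simp: indicator_def held_Suc)
    qed
    then have "(\<integral>\<omega>. indicator {..<Suc j} (held (Suc N) \<omega>) \<partial>M) = ?less j N + (?at N - ?at N * ?s)"
      using int[of "\<lambda>_. 1"] int[of "indicator (X j)"]
      by (simp add: Bochner_Integration.integral_add Bochner_Integration.integral_diff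
          Bochner_Integration.integrable_diff integral_indicator_held integral_held_selects)
    then show "?less (Suc j) (Suc N) = ?less j N + (1 - ?s) * ?at N"
      by (simp add: integral_indicator_held algebra_simps)
  qed (use Suc r_pos[of j] in auto)
qed simp

lemma AE_held_reaches: "AE \<omega> in M. \<exists>N. n \<le> held N \<omega>"
proof -
  let ?S = "{\<omega> \<in> space M. \<not> (\<exists>N. n \<le> held N \<omega>)}"
  have "prob ?S \<le> prob {\<omega> \<in> space M. held N \<omega> < n}" for N
    by (intro finite_measure_mono) (auto simp: not_le)
  then have "prob ?S \<le> 0"
    by (intro LIMSEQ_le_const[OF prob_held_less_tendsto_0]) auto
  then have "prob ?S = 0" using measure_nonneg[of M ?S] by linarith
  then show ?thesis by (subst AE_iff_measurable[OF _ refl]) (auto simp: emeasure_eq_measure)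
qed

lemma expected_Gap_le_horizon:
  assumes n_pos: "1 \<le> n" and Gap_int: "integrable M (\<lambda>\<omega>. Gap X (\<lambda>t. Y t \<omega>) n)"
  shows "real n * (\<integral>\<omega>. Gap X (\<lambda>t. Y t \<omega>) n \<partial>M) \<le>
           mean_gap * (\<Sum>j<n. r j) + real n * prob {\<omega> \<in> space M. held N \<omega> < n}"
proof -
  have "real n * (\<integral>\<omega>. Gap X (\<lambda>t. Y t \<omega>) n \<partial>M) \<le>
        (\<integral>\<omega>. (\<Sum>j<n. collected_gap X (\<lambda>i. Y i \<omega>) N j) + real n * indicator {..<n} (held N \<omega>) \<partial>M)"
    unfolding integral_mult_right_zero[symmetric]
  proof (rule integral_mono_AE)
    show "integrable M (\<lambda>\<omega>. real n * Gap X (\<lambda>t. Y t \<omega>) n)" using Gap_int by simp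
    show "integrable M (\<lambda>\<omega>. (\<Sum>j<n. collected_gap X (\<lambda>i. Y i \<omega>) N j) + real n * indicator {..<n} (held N \<omega>))"
      using integrable_held_Y[of "\<lambda>_. 1" 1 "{..<n}" N]
      by (intro Bochner_Integration.integrable_add Bochner_Integration.integrable_sum
          Bochner_Integration.integrable_mult_right integrable_collected_gap) auto
    show "AE \<omega> in M. real n * Gap X (\<lambda>t. Y t \<omega>) n \<le>
            (\<Sum>j<n. collected_gap X (\<lambda>i. Y i \<omega>) N j) + real n * indicator {..<n} (held N \<omega>)"
      using AE_Y_01
    proof eventually_elim
      case (elim \<omega>)
      then show ?case
        using Gap_le_collected_gap[of "\<lambda>t. Y t \<omega>" n X N] n_pos by (auto simp: held_def indicator_def)
    qed
  qed
  also have "\<dots> = (\<Sum>j<n. r j * mean_gap * prob {\<omega> \<in> space M. j < held N \<omega>})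
                    + real n * prob {\<omega> \<in> space M. held N \<omega> < n}"
    using integrable_held_Y[of "\<lambda>_. 1" 1 "{..<n}" N] integrable_collected_gap
    by (simp add: Bochner_Integration.integral_add Bochner_Integration.integral_sum
        integral_collected_gap integral_indicator_held)
  also have "(\<Sum>j<n. r j * mean_gap * prob {\<omega> \<in> space M. j < held N \<omega>}) \<le> (\<Sum>j<n. r j * mean_gap)"
    using r_pos mean_gap_nonneg by (intro sum_mono mult_left_le) (auto intro: mult_nonneg_nonneg less_imp_le)
  finally show ?thesis by (simp add: sum_distrib_left mult.commute)
qed

lemma expected_Gap_le:
  assumes "1 \<le> n" and "integrable M (\<lambda>\<omega>. Gap X (\<lambda>t. Y t \<omega>) n)"
  shows "real n * (\<integral>\<omega>. Gap X (\<lambda>t. Y t \<omega>) n \<partial>M) \<le> mean_gap * (\<Sum>j<n. r j)"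
proof (rule LIMSEQ_le_const)
  show "(\<lambda>N. mean_gap * (\<Sum>j<n. r j) + real n * prob {\<omega> \<in> space M. held N \<omega> < n})
          \<longlonglongrightarrow> mean_gap * (\<Sum>j<n. r j)"
    using tendsto_add[OF tendsto_const tendsto_mult_left[OF prob_held_less_tendsto_0, of "real n"]] by simp
qed (use expected_Gap_le_horizon[OF assms] in auto)

lemma expected_Gap_opt_ge_horizon:
  assumes n_pos: "1 \<le> n" and Gap_opt_int: "integrable M (\<lambda>\<omega>. Gap_opt X (\<lambda>t. Y t \<omega>) n)"
  shows "r (n - 1) * mean_gap * (1 - prob {\<omega> \<in> space M. held N \<omega> < n}) \<le>
           (\<integral>\<omega>. Gap_opt X (\<lambda>t. Y t \<omega>) n \<partial>M)"
proof -
  let ?c = "r (n - 1)" and ?late = "{\<omega> \<in> space M. held N \<omega> < n}"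
  have "1 - prob ?late \<le> prob {\<omega> \<in> space M. j < held N \<omega>}" if "j < n" for j
    using that by (subst prob_compl[symmetric]) (auto intro!: finite_measure_mono)
  then have "real n * (?c * mean_gap * (1 - prob ?late)) \<le>
             (\<Sum>j<n. ?c * mean_gap * prob {\<omega> \<in> space M. j < held N \<omega>})"
    using sum_mono[of "{..<n}" "\<lambda>_. ?c * mean_gap * (1 - prob ?late)"] r_pos[of "n - 1"] mean_gap_nonneg
    by (simp add: mult_left_mono)
  also have "\<dots> = (\<Sum>j<n. ?c / r j * (\<integral>\<omega>. collected_gap X (\<lambda>i. Y i \<omega>) N j \<partial>M))"
    using r_pos[THEN less_imp_neq, THEN not_sym] by (simp add: integral_collected_gap mult.assoc)
  also have "\<dots> = (\<integral>\<omega>. (\<Sum>j<n. ?c / r j * collected_gap X (\<lambda>i. Y i \<omega>) N j) \<partial>M)"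
    by (simp add: Bochner_Integration.integral_sum integrable_collected_gap)
  also have "\<dots> \<le> (\<integral>\<omega>. real n * Gap_opt X (\<lambda>t. Y t \<omega>) n \<partial>M)"
  proof (rule integral_mono_AE)
    show "integrable M (\<lambda>\<omega>. \<Sum>j<n. ?c / r j * collected_gap X (\<lambda>i. Y i \<omega>) N j)"
      by (intro Bochner_Integration.integrable_sum Bochner_Integration.integrable_mult_right
          integrable_collected_gap)
    show "integrable M (\<lambda>\<omega>. real n * Gap_opt X (\<lambda>t. Y t \<omega>) n)" using Gap_opt_int by simp
    show "AE \<omega> in M. (\<Sum>j<n. ?c / r j * collected_gap X (\<lambda>i. Y i \<omega>) N j) \<le> real n * Gap_opt X (\<lambda>t. Y t \<omega>) n"
      using AE_Y_01 AE_held_reaches[of n]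
    proof eventually_elim
      case (elim \<omega>)
      then obtain N' where "n \<le> nsel X (\<lambda>t. Y t \<omega>) N'" by (auto simp: held_def)
      then show ?case
        using elim Gap_opt_ge_weighted_collected_gap[of "\<lambda>t. Y t \<omega>" n r N' N] n_pos r_pos r_dec by auto
    qed
  qed
  finally show ?thesis using n_pos by simp
qed

lemma expected_Gap_opt_ge:
  assumes "1 \<le> n" and "integrable M (\<lambda>\<omega>. Gap_opt X (\<lambda>t. Y t \<omega>) n)"
  shows "r (n - 1) * mean_gap \<le> (\<integral>\<omega>. Gap_opt X (\<lambda>t. Y t \<omega>) n \<partial>M)"
proof (rule LIMSEQ_le_const2)
  show "(\<lambda>N. r (n - 1) * mean_gap * (1 - prob {\<omega> \<in> space M. held N \<omega> < n})) \<longlonglongrightarrow> r (n - 1) * mean_gap"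
    using tendsto_mult_left[OF tendsto_diff[OF tendsto_const prob_held_less_tendsto_0],
        of "r (n - 1) * mean_gap" 1 n] by simp
qed (use expected_Gap_opt_ge_horizon[OF assms] in auto)

lemma expected_Gap_nonneg: "0 \<le> (\<integral>\<omega>. Gap X (\<lambda>t. Y t \<omega>) n \<partial>M)"
  by (rule integral_nonneg_AE) (use AE_Y_01 in \<open>auto simp: Gap_def intro!: gap_of_nonneg\<close>)

lemma expected_Gap_ratio_le:
  assumes n_pos: "1 \<le> n"
  shows "(\<integral>\<omega>. Gap X (\<lambda>t. Y t \<omega>) n \<partial>M) / (\<integral>\<omega>. Gap_opt X (\<lambda>t. Y t \<omega>) n \<partial>M)
           \<le> (\<Sum>j<n. r j) / (real n * r (n - 1))"
proof -
  define A where "A = (\<integral>\<omega>. Gap X (\<lambda>t. Y t \<omega>) n \<partial>M)"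
  define B where "B = (\<integral>\<omega>. Gap_opt X (\<lambda>t. Y t \<omega>) n \<partial>M)"
  let ?S = "\<Sum>j<n. r j" and ?c = "r (n - 1)"
  have A_nonneg: "0 \<le> A" unfolding A_def by (rule expected_Gap_nonneg)
  have n_c: "0 < real n * ?c" using n_pos r_pos[of "n - 1"] by simp
  have S_nonneg: "0 \<le> ?S" using r_pos by (simp add: sum_nonneg less_imp_le)
  show ?thesis
  proof (cases "B \<le> 0 \<or> A = 0")
    case True
    then have "A / B \<le> 0" using A_nonneg by (auto simp: divide_nonneg_nonpos)
    also have "0 \<le> ?S / (real n * ?c)" using S_nonneg n_c by simp
    finally show ?thesis unfolding A_def B_def .
  next
    case False
    then have "0 < A" "0 < B" using A_nonneg by auto
    \<comment> \<open>a nonzero Bochner integral certifies integrability\<close>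
    then have "integrable M (\<lambda>\<omega>. Gap X (\<lambda>t. Y t \<omega>) n)" "integrable M (\<lambda>\<omega>. Gap_opt X (\<lambda>t. Y t \<omega>) n)"
      unfolding A_def B_def using not_integrable_integral_eq by force+
    then have upper: "real n * A \<le> mean_gap * ?S" and lower: "?c * mean_gap \<le> B"
      unfolding A_def B_def using expected_Gap_le expected_Gap_opt_ge n_pos by auto
    have "0 < real n * A" using \<open>0 < A\<close> n_pos by simp
    then have "0 < mean_gap * ?S" using upper by linarith
    then have mean_pos: "0 < mean_gap" using mean_gap_nonneg S_nonneg by (simp add: zero_less_mult_iff)
    have "A / B \<le> A / (?c * mean_gap)"
      using \<open>0 < A\<close> \<open>0 < B\<close> lower r_pos[of "n - 1"] mean_pos by (intro divide_left_mono) auto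
    also have "\<dots> \<le> (mean_gap * ?S / real n) / (?c * mean_gap)"
      using upper n_pos r_pos[of "n - 1"] mean_pos
      by (intro divide_right_mono) (auto simp: pos_le_divide_eq mult.commute)
    also have "\<dots> = ?S / (real n * ?c)" using mean_pos by (simp add: field_simps)
    finally show ?thesis unfolding A_def B_def .
  qed
qed

end

theorem theorem1:
  fixes \<alpha> :: real
  assumes "0 \<le> \<alpha>" and "\<alpha> < 1"
  shows "\<exists>C::real. \<forall>(k::real) (M::(nat \<Rightarrow> real) measure) (Y::nat \<Rightarrow> (nat \<Rightarrow> real) \<Rightarrow> real).
     k > 0 \<and> prob_space M
     \<and> (\<forall>i. Y i \<in> borel_measurable M)
     \<and> prob_space.indep_vars M (\<lambda>_. borel) Y UNIV
     \<and> (\<forall>i x. 0 \<le> x \<and> x \<le> 1 \<longrightarrow> measure M {\<omega> \<in> space M. 1 - Y i \<omega> \<le> x} = x powr k)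
     \<longrightarrow> (\<forall>n::nat. n \<ge> 1 \<longrightarrow>
            (\<integral>\<omega>. Gap (pow_thr \<alpha>) (\<lambda>t. Y t \<omega>) n \<partial>M)
              / (\<integral>\<omega>. Gap_opt (pow_thr \<alpha>) (\<lambda>t. Y t \<omega>) n \<partial>M) \<le> C)"
proof (intro exI[of _ "2 / (1 - \<alpha>)"] allI impI)
  fix k :: real and M :: "(nat \<Rightarrow> real) measure" and Y :: "nat \<Rightarrow> (nat \<Rightarrow> real) \<Rightarrow> real" and n :: nat
  assume model: "k > 0 \<and> prob_space M \<and> (\<forall>i. Y i \<in> borel_measurable M)
     \<and> prob_space.indep_vars M (\<lambda>_. borel) Y UNIV
     \<and> (\<forall>i x. 0 \<le> x \<and> x \<le> 1 \<longrightarrow> measure M {\<omega> \<in> space M. 1 - Y i \<omega> \<le> x} = x powr k)"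
    and n_pos: "n \<ge> 1"
  have "power_law_selection M k (pow_radius \<alpha>) Y"
    unfolding power_law_selection_def power_law_selection_axioms_def
    using model pow_radius_pos pow_radius_le_1[OF assms(1)] decseq_pow_radius[OF assms(1)] by blast
  then interpret power_law_selection M k "pow_radius \<alpha>" Y .
  have "(\<integral>\<omega>. Gap (pow_thr \<alpha>) (\<lambda>t. Y t \<omega>) n \<partial>M) / (\<integral>\<omega>. Gap_opt (pow_thr \<alpha>) (\<lambda>t. Y t \<omega>) n \<partial>M)
        \<le> (\<Sum>j<n. pow_radius \<alpha> j) / (real n * pow_radius \<alpha> (n - 1))"
    unfolding pow_thr_eq_gap_threshold_rule[OF assms(1)] by (rule expected_Gap_ratio_le[OF n_pos])
  also have "\<dots> \<le> 2 / (1 - \<alpha>)"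
    using sum_pow_radius_le[OF assms n_pos] n_pos pow_radius_pos[of \<alpha> "n - 1"]
    by (simp add: divide_le_eq mult.commute)
  finally show "(\<integral>\<omega>. Gap (pow_thr \<alpha>) (\<lambda>t. Y t \<omega>) n \<partial>M)
      / (\<integral>\<omega>. Gap_opt (pow_thr \<alpha>) (\<lambda>t. Y t \<omega>) n \<partial>M) \<le> 2 / (1 - \<alpha>)" .
qed

end
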